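(* Let $L_m$ be the quiver with one vertex and $m\ge0$ loops, and $d\geq0$. Then the set $\hat S(d)$ (for $Q=L_m$) is $$\hat S(d)=\begin{cases}\text{all subsets of }\{1,\ldots,d\},& m=0,\\ \{\emptyset,\{d\},\{d-1,d\},\ldots,\{2,\ldots,d\},\{1,\ldots,d\}\},& m=1,\\ \{\emptyset,\{1,\ldots,d\}\},& m\geq2.\end{cases}$$
   Context: For a quiver $Q$ with vertex set $Q_0$ and arrows $\alpha:i\to j$, and $\mathbf e\in\mathbb NQ_0$: for tuples $\mathbf K=(K_i)$ with $K_i\subset\{1,\dots,e_i\}$, $|\mathbf K|=(|K_i|)_i$; writing $K_i=\{k_{i,1}<\ldots<k_{i,|K_i|}\}$ and for $\mathbf L$ with $L_i\subset\{1,\dots,|K_i|\}$, $\mathrm{ht}(\mathbf K,\mathbf L)=\sum_i\sum_{j\in L_i}(k_{i,j}-j)$. The sets $\hat S(\mathbf e)$ are defined recursively: $\mathbf K$ (with $K_i\subset\{1,\dots,e_i\}$) belongs to $\hat S(\mathbf e)$ iff $\mathrm{ht}(\mathbf K,\mathbf L)\geq\sum_{\alpha:i\to j}|L_i|(e_j-|K_j|)$ for all $\mathbf L\in\hat S(|\mathbf K|)$. For $L_m$ (one vertex, $m$ loops) this reads: $K=\{k_1<\dots<k_{|K|}\}\subset\{1,\dots,d\}$ lies in $\hat S(d)$ iff $\sum_{j\in L}(k_j-j)\geq m|L|(d-|K|)$ for all $L\in\hat S(|K|)$. *)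

theory Defs
  imports Main
begin

text \<open>The quiver L_m: one vertex, m loops. A dimension vector is a natural number d.\<close>

definition ht :: "nat set \<Rightarrow> nat set \<Rightarrow> int" where
  "ht K L = (\<Sum>j\<in>L. int (sorted_list_of_set K ! (j - 1)) - int j)"

text \<open>The full set {1..d} satisfies the defining inequality trivially
  (both sides are 0), so it is admitted directly; every other K has card K < d, so only
  strictly smaller values of prev are consulted.\<close>

definition Shat_step :: "nat \<Rightarrow> nat \<Rightarrow> (nat \<Rightarrow> nat set set) \<Rightarrow> nat set set" where
  "Shat_step m d prev =
     {K. K \<subseteq> {1..d} \<and>
         (card K = d \<or>
          (\<forall>L \<in> prev (card K). ht K L \<ge> int (m * card L * (d - card K))))}"

primrec Shat_table :: "nat \<Rightarrow> nat \<Rightarrow> (nat \<Rightarrow> nat set set)" where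
  "Shat_table m 0 = (\<lambda>n. Shat_step m n (\<lambda>_. {}))"
| "Shat_table m (Suc d) = (Shat_table m d)(Suc d := Shat_step m (Suc d) (Shat_table m d))"

definition Shat :: "nat \<Rightarrow> nat \<Rightarrow> nat set set" where
  "Shat m d = Shat_table m d d"

end

theory Submission
  imports Defs
begin

text \<open>Write \<open>c = |K|\<close> and \<open>k\<^sub>j\<close> for the \<open>j\<close>-th smallest element of \<open>K \<subseteq> {1..d}\<close>. Every summand
  \<open>k\<^sub>j - j\<close> of \<open>ht K L\<close> lies between \<open>0\<close> and \<open>d - c\<close>, with the upper bound attained
  throughout exactly for the top interval \<open>K = {d-c+1..d}\<close>. Since the full set \<open>{1..c}\<close> always
  belongs to \<open>Shat m c\<close>, a proper nonempty \<open>K \<in> Shat m d\<close> satisfies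
  \<open>m c (d - c) \<le> ht K {1..c} \<le> c (d - c)\<close>. For \<open>m = 0\<close> every constraint is vacuous, for \<open>m \<ge> 2\<close>
  no proper nonempty \<open>K\<close> survives, and for \<open>m = 1\<close> the bound is attained, forcing \<open>K\<close> to be a
  top interval; conversely top intervals satisfy all constraints with equality.\<close>

lemma sorted_wrt_less_nth_gap:
  assumes "sorted_wrt (<) (xs :: nat list)" "i \<le> j" "j < length xs"
  shows "xs ! i + (j - i) \<le> xs ! j"
  using assms(2,3)
proof (induction j)
  case 0
  then show ?case by simp
next
  case (Suc j)
  show ?case
  proof (cases "i = Suc j")
    case False
    then have "i \<le> j" using Suc.prems by simp
    with Suc have "xs ! i + (j - i) \<le> xs ! j" by simp
    moreover have "xs ! j < xs ! Suc j"
      using Suc.prems assms(1) sorted_wrt_nth_less by fastforce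
    ultimately show ?thesis using \<open>i \<le> j\<close> by linarith
  qed simp
qed

lemma sorted_list_of_set_nth_bounds:
  assumes "K \<subseteq> {1..d}" "j \<in> {1..card K}"
  shows "j \<le> sorted_list_of_set K ! (j - 1)"
    and "sorted_list_of_set K ! (j - 1) + (card K - j) \<le> d"
proof -
  define xs where "xs = sorted_list_of_set K"
  have "finite K" using assms(1) finite_subset by blast
  then have len: "length xs = card K" and set_xs: "set xs = K" and sorted: "sorted_wrt (<) xs"
    by (simp_all add: xs_def)
  have "xs ! 0 \<in> K" "xs ! (card K - 1) \<in> K"
    using assms(2) len set_xs nth_mem[of _ xs] by auto
  then have "1 \<le> xs ! 0" "xs ! (card K - 1) \<le> d" using assms(1) by auto
  moreover have "j - 1 < length xs" using len assms(2) by auto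
  then have "xs ! 0 + (j - 1) \<le> xs ! (j - 1)"
    using sorted_wrt_less_nth_gap[OF sorted, of 0 "j - 1"] by (metis diff_zero le0)
  moreover have "xs ! (j - 1) + (card K - j) \<le> xs ! (card K - 1)"
    using sorted_wrt_less_nth_gap[OF sorted, of "j - 1" "card K - 1"] len assms(2) by auto
  ultimately show "j \<le> xs ! (j - 1)" "xs ! (j - 1) + (card K - j) \<le> d"
    using assms(2) by auto
qed

lemma card_le_of_subset_atLeastAtMost: "K \<subseteq> {1..d} \<Longrightarrow> card K \<le> d"
  using card_mono[of "{1..d}" K] by simp

lemma ht_summand_bounds:
  assumes "K \<subseteq> {1..d}" "j \<in> {1..card K}"
  shows "0 \<le> int (sorted_list_of_set K ! (j - 1)) - int j"
    and "int (sorted_list_of_set K ! (j - 1)) - int j \<le> int d - int (card K)"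
  using sorted_list_of_set_nth_bounds[OF assms] assms(2) by auto

lemma ht_nonneg:
  assumes "K \<subseteq> {1..d}" "L \<subseteq> {1..card K}"
  shows "0 \<le> ht K L"
  unfolding ht_def using ht_summand_bounds(1)[OF assms(1)] assms(2)
  by (intro sum_nonneg) blast

lemma ht_le:
  assumes "K \<subseteq> {1..d}" "L \<subseteq> {1..card K}"
  shows "ht K L \<le> int (card L) * (int d - int (card K))"
proof -
  have "ht K L \<le> (\<Sum>j\<in>L. int d - int (card K))"
    unfolding ht_def using ht_summand_bounds(2)[OF assms(1)] assms(2)
    by (intro sum_mono) blast
  then show ?thesis by simp
qed

lemma ht_top_interval:
  assumes "1 \<le> a" "L \<subseteq> {1..card {a..d}}"
  shows "ht {a..d} L = int (card L) * (int d - int (card {a..d}))"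
proof -
  have sl: "sorted_list_of_set {a..d} = [a..<Suc d]"
    using sorted_list_of_set_range[of a "Suc d"] atLeastLessThanSuc_atLeastAtMost by simp
  have "ht {a..d} L = (\<Sum>j\<in>L. int d - int (card {a..d}))"
    unfolding ht_def
  proof (rule sum.cong)
    fix j assume "j \<in> L"
    then have j: "1 \<le> j" "j \<le> Suc d - a" using assms(2) by auto
    then have "[a..<Suc d] ! (j - 1) = a + (j - 1)" by (intro nth_upt) simp
    then show "int (sorted_list_of_set {a..d} ! (j - 1)) - int j = int d - int (card {a..d})"
      using sl j assms(1) by simp
  qed simp
  then show ?thesis by simp
qed

text \<open>If \<open>ht K {1..c}\<close> reaches its maximum \<open>c (d - c)\<close>, every summand does, in particular
  \<open>k\<^sub>1 - 1 = d - c\<close>; then \<open>K \<subseteq> {d-c+1..d}\<close>, and both sets have \<open>c\<close> elements.\<close>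

lemma top_interval_if_ht_maximal:
  assumes K: "K \<subseteq> {1..d}" "K \<noteq> {}"
    and maximal: "int (card K) * (int d - int (card K)) \<le> ht K {1..card K}"
  shows "K = {d - card K + 1..d}"
proof -
  define c where "c = card K"
  define slack where "slack j = int d - int c - (int (sorted_list_of_set K ! (j - 1)) - int j)" for j
  have fin: "finite K" using K(1) finite_subset by blast
  then have "1 \<le> c" using K(2) by (simp add: c_def Suc_le_eq card_gt_0_iff)
  have slack_nonneg: "0 \<le> slack j" if "j \<in> {1..c}" for j
    using ht_summand_bounds(2)[OF K(1)] that by (simp add: slack_def c_def)
  have "sum slack {1..c} = int c * (int d - int c) - ht K {1..c}"
    by (simp add: slack_def ht_def sum_subtractf)
  then have "sum slack {1..c} = 0"
    using maximal sum_nonneg[of "{1..c}" slack] slack_nonneg by (simp add: c_def)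
  then have "slack 1 = 0"
    using sum_nonneg_eq_0_iff[of "{1..c}" slack] slack_nonneg \<open>1 \<le> c\<close> by simp
  moreover have "sorted_list_of_set K ! 0 = Min K"
    using sorted_list_of_set_nonempty[OF fin K(2)] by simp
  ultimately have "Min K = d - c + 1"
    using card_le_of_subset_atLeastAtMost[OF K(1)] by (simp add: slack_def c_def)
  then have "K \<subseteq> {d - c + 1..d}" using K(1) Min_le[OF fin] by fastforce
  moreover have "card {d - c + 1..d} = c"
    using card_le_of_subset_atLeastAtMost[OF K(1)] \<open>1 \<le> c\<close> by (simp add: c_def)
  ultimately show ?thesis
    using card_subset_eq[of "{d - c + 1..d}" K] unfolding c_def by simp
qed

lemma Shat_table_eq: "n \<le> d \<Longrightarrow> Shat_table m d n = Shat m n"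
proof (induction d arbitrary: n)
  case (Suc d)
  then show ?case by (cases "n = Suc d") (simp_all add: Shat_def)
qed (simp add: Shat_def)

text \<open>Not a simp rule: its right-hand side again mentions membership in \<open>Shat\<close>, so the
  simplifier would unfold it indefinitely. Use instances such as \<open>mem_Shat[of K m d]\<close>.\<close>

lemma mem_Shat:
  "K \<in> Shat m d \<longleftrightarrow> K \<subseteq> {1..d} \<and>
     (card K = d \<or> (\<forall>L \<in> Shat m (card K). int (m * card L * (d - card K)) \<le> ht K L))"
proof (cases d)
  case 0
  then show ?thesis by (auto simp: Shat_def Shat_step_def)
next
  case (Suc n)
  have table: "Shat_table m n (card K) = Shat m (card K)" if "K \<subseteq> {1..d}" "card K \<noteq> d"
    using card_le_of_subset_atLeastAtMost[OF that(1)] that(2) Suc by (intro Shat_table_eq) simp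
  have "K \<in> Shat m d \<longleftrightarrow> K \<subseteq> {1..d} \<and>
     (card K = d \<or> (\<forall>L \<in> Shat_table m n (card K). int (m * card L * (d - card K)) \<le> ht K L))"
    using Suc by (simp add: Shat_def Shat_step_def)
  then show ?thesis
    using table by (cases "K \<subseteq> {1..d} \<and> card K \<noteq> d") auto
qed

lemma Shat_subset: "K \<in> Shat m d \<Longrightarrow> K \<subseteq> {1..d}"
  using mem_Shat by blast

lemma atLeastAtMost_in_Shat: "{1..d} \<in> Shat m d"
  using mem_Shat[of "{1..d}" m d] by simp

lemma empty_in_Shat: "{} \<in> Shat m d"
proof -
  have "Shat m 0 = {{}}" using atLeastAtMost_in_Shat[where d = 0] Shat_subset[where d = 0] by auto
  then show ?thesis using mem_Shat[of "{}" m d] by (simp add: ht_def)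
qed

lemma ht_lower_bound_if_in_Shat:
  assumes "K \<in> Shat m d" "card K \<noteq> d"
  shows "int (m * card K * (d - card K)) \<le> ht K {1..card K}"
proof -
  have "int (m * card {1..card K} * (d - card K)) \<le> ht K {1..card K}"
    using assms atLeastAtMost_in_Shat[of "card K" m] mem_Shat[of K m d] by blast
  then show ?thesis by simp
qed

lemma Shat_no_loops: "Shat 0 d = Pow {1..d}"
proof (intro equalityI subsetI)
  fix K assume "K \<in> Pow {1..d}"
  moreover have "\<forall>L \<in> Shat 0 (card K). int (0 * card L * (d - card K)) \<le> ht K L"
    using calculation ht_nonneg[of K d] Shat_subset by auto
  ultimately show "K \<in> Shat 0 d" using mem_Shat[of K 0 d] by blast
qed (use Shat_subset in blast)

lemma Shat_one_loop: "Shat 1 d = {{i..d} | i. 1 \<le> i \<and> i \<le> d + 1}"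
proof (intro equalityI subsetI)
  fix K assume K: "K \<in> Shat 1 d"
  have sub: "K \<subseteq> {1..d}" using K Shat_subset by blast
  consider "K = {}" | "card K = d" | "K \<noteq> {}" "card K \<noteq> d" by blast
  then show "K \<in> {{i..d} | i. 1 \<le> i \<and> i \<le> d + 1}"
  proof cases
    case 1
    then show ?thesis by (intro CollectI exI[of _ "d + 1"]) auto
  next
    case 2
    then have "K = {1..d}" using card_subset_eq[OF _ sub] by simp
    then show ?thesis by auto
  next
    case 3
    have "int (card K) * (int d - int (card K)) \<le> ht K {1..card K}"
      using ht_lower_bound_if_in_Shat[OF K 3(2)] card_le_of_subset_atLeastAtMost[OF sub]
      by (simp add: of_nat_diff)
    then have "K = {d - card K + 1..d}" using top_interval_if_ht_maximal[OF sub 3(1)] by simp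
    then show ?thesis by auto
  qed
next
  fix K assume "K \<in> {{i..d} | i. 1 \<le> i \<and> i \<le> d + 1}"
  then obtain a where a: "K = {a..d}" "1 \<le> a" by auto
  then have sub: "K \<subseteq> {1..d}" by auto
  have "int (card L * (d - card K)) \<le> ht K L" if "L \<in> Shat 1 (card K)" for L
    using ht_top_interval[OF a(2), of L] Shat_subset[OF that] a(1)
      card_le_of_subset_atLeastAtMost[OF sub] by (simp add: of_nat_diff)
  then show "K \<in> Shat 1 d" using sub mem_Shat[of K 1 d] by simp
qed

lemma Shat_several_loops:
  assumes "2 \<le> m"
  shows "Shat m d = {{}, {1..d}}"
proof (intro equalityI subsetI)
  fix K assume K: "K \<in> Shat m d"
  have sub: "K \<subseteq> {1..d}" using K Shat_subset by blast
  show "K \<in> {{}, {1..d}}"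
  proof (rule ccontr)
    assume "K \<notin> {{}, {1..d}}"
    then have "K \<noteq> {}" "card K \<noteq> d" using card_subset_eq[OF _ sub] by auto
    moreover have "0 < card K" using \<open>K \<noteq> {}\<close> finite_subset[OF sub] by (simp add: card_gt_0_iff)
    ultimately have "0 < int (card K) * (int d - int (card K))"
      using card_le_of_subset_atLeastAtMost[OF sub] by simp
    moreover have "int m * (int (card K) * (int d - int (card K))) \<le> 1 * (int (card K) * (int d - int (card K)))"
      using ht_lower_bound_if_in_Shat[OF K \<open>card K \<noteq> d\<close>] ht_le[OF sub, of "{1..card K}"]
        card_le_of_subset_atLeastAtMost[OF sub] by (simp add: of_nat_diff mult.assoc)
    ultimately have "int m \<le> 1" using mult_right_le_imp_le by blast
    then show False using assms by simp
  qed
qed (use empty_in_Shat atLeastAtMost_in_Shat in blast)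

theorem mainTheorem10:
  fixes m d :: nat
  shows "(m = 0 \<longrightarrow> Shat m d = Pow {1..d}) \<and>
         (m = 1 \<longrightarrow> Shat m d = {{i..d} | i. 1 \<le> i \<and> i \<le> d + 1}) \<and>
         (m \<ge> 2 \<longrightarrow> Shat m d = {{}, {1..d}})"
  by (intro conjI impI) (simp_all only: Shat_no_loops Shat_one_loop Shat_several_loops)

end
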